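(* Let $n\ge 2$, let $m\ge3$ be odd, let $\mathcal{A}$ be an $m$th order $n$-dimensional complete Hankel tensor, and let $x=(x_1,\dots,x_n)^\top$ be a Z-eigenvector of $\mathcal{A}$ associated with a Z-eigenvalue $\lambda$. If $\lambda>0$, then $x_i\ge0$ for all odd $i$ and $x_1>0$; if $\lambda<0$, then $x_i\le 0$ for all odd $i$ and $x_1<0$.
   Context: A complete Hankel tensor is a tensor of the form $\mathcal{A}=\sum_{k=1}^r\alpha_k(u_k)^m$ with $\alpha_k>0$, $u_k=(1,u_k,u_k^2,\dots,u_k^{n-1})^\top$ for pairwise distinct reals $u_1,\dots,u_r$, where $w^m$ denotes the tensor with entries $w_{i_1}\cdots w_{i_m}$. For $\mathcal{A}=(a_{i_1\cdots i_m})$ and $x\in\mathbb{R}^n$, $\mathcal{A}x^{m-1}$ is the vector with $i$th component $\sum_{i_2,\dots,i_m=1}^n a_{ii_2\cdots i_m}x_{i_2}\cdots x_{i_m}$. A real $\lambda$ is a Z-eigenvalue with Z-eigenvector $x\in\mathbb{R}^n$ if $x^\top x=1$ and $\mathcal{A}x^{m-1}=\lambda x$. *)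

theory Defs
  imports "HOL-Analysis.Analysis"
begin

text \<open>Tensors of order m and dimension n are functions on index lists of length m
  with entries in {0..<n} (0-based; paper index i corresponds to i-1 here).
  Vectors in R^n are functions nat => real, only the values below n matter.\<close>

definition tensor_indices :: "nat \<Rightarrow> nat \<Rightarrow> nat list set" where
  "tensor_indices n k = {is. length is = k \<and> set is \<subseteq> {..<n}}"

definition complete_hankel :: "nat \<Rightarrow> nat \<Rightarrow> (nat list \<Rightarrow> real) \<Rightarrow> bool" where
  "complete_hankel n m A \<longleftrightarrow>
     (\<exists>r (\<alpha>::nat \<Rightarrow> real) (u::nat \<Rightarrow> real).
        (\<forall>k<r. \<alpha> k > 0) \<and> inj_on u {..<r} \<and>
        (\<forall>is\<in>tensor_indices n m.
           A is = (\<Sum>k<r. \<alpha> k * prod_list (map (\<lambda>i. u k ^ i) is))))"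

definition tensor_apply :: "nat \<Rightarrow> nat \<Rightarrow> (nat list \<Rightarrow> real) \<Rightarrow> (nat \<Rightarrow> real) \<Rightarrow> nat \<Rightarrow> real" where
  "tensor_apply n m A x i =
     (\<Sum>is\<in>tensor_indices n (m - 1). A (i # is) * prod_list (map x is))"

definition Z_eigenpair :: "nat \<Rightarrow> nat \<Rightarrow> (nat list \<Rightarrow> real) \<Rightarrow> real \<Rightarrow> (nat \<Rightarrow> real) \<Rightarrow> bool" where
  "Z_eigenpair n m A lam x \<longleftrightarrow>
     (\<Sum>i<n. x i ^ 2) = 1 \<and> (\<forall>i<n. tensor_apply n m A x i = lam * x i)"

end

theory Submission
  imports Defs
begin

text \<open>Expanding the complete Hankel tensor into its rank-one terms gives
  (A x^(m-1))_i = \<Sum>_k \<alpha>_k u_k^(i-1) \<langle>u_k, x\<rangle>^(m-1). As m - 1 is even, every summand is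
  nonnegative when i is odd, so \<lambda> x_i \<ge> 0. If moreover \<lambda> x_1 = 0, the nonnegative summands
  \<alpha>_k \<langle>u_k, x\<rangle>^(m-1) all vanish, hence \<lambda> x = A x^(m-1) = 0, which is impossible for a
  unit vector x when \<lambda> \<noteq> 0.\<close>

lemma tensor_indices_0: "tensor_indices n 0 = {[]}"
  unfolding tensor_indices_def by auto

lemma tensor_indices_Suc:
  "tensor_indices n (Suc d) = (\<lambda>(j, is). j # is) ` ({..<n} \<times> tensor_indices n d)"
proof (rule set_eqI)
  fix xs :: "nat list"
  show "xs \<in> tensor_indices n (Suc d) \<longleftrightarrow> xs \<in> (\<lambda>(j, is). j # is) ` ({..<n} \<times> tensor_indices n d)"
    unfolding tensor_indices_def by (cases xs) auto
qed

lemma sum_tensor_indices_prod_list: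
  "(\<Sum>is\<in>tensor_indices n d. prod_list (map f is)) = (\<Sum>j<n. f j :: 'a :: comm_semiring_1) ^ d"
proof (induction d)
  case 0
  then show ?case by (simp add: tensor_indices_0)
next
  case (Suc d)
  have inj: "inj_on (\<lambda>(j, is). j # is) ({..<n} \<times> tensor_indices n d)"
    by (auto simp: inj_on_def)
  have "(\<Sum>is\<in>tensor_indices n (Suc d). prod_list (map f is))
      = (\<Sum>j<n. \<Sum>is\<in>tensor_indices n d. f j * prod_list (map f is))"
    unfolding tensor_indices_Suc sum.reindex[OF inj] sum.cartesian_product'
    by (simp add: case_prod_beta)
  also have "\<dots> = (\<Sum>j<n. f j) * (\<Sum>is\<in>tensor_indices n d. prod_list (map f is))"
    by (rule sum_product[symmetric])
  finally show ?case using Suc by simp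
qed

lemma prod_list_map_mult:
  "prod_list (map (\<lambda>j. f j * g j) xs) = prod_list (map f xs) * (prod_list (map g xs) :: 'a :: comm_monoid_mult)"
  by (induction xs) (simp_all add: ac_simps)

lemma tensor_apply_rank_one_sum:
  assumes A: "\<forall>is\<in>tensor_indices n m. A is = (\<Sum>k<r. \<alpha> k * prod_list (map (\<lambda>i. u k ^ i) is))"
    and "m \<ge> 1" and "i < n"
  shows "tensor_apply n m A x i = (\<Sum>k<r. \<alpha> k * u k ^ i * (\<Sum>j<n. u k ^ j * x j) ^ (m - 1))"
proof -
  have entry: "A (i # is) = (\<Sum>k<r. \<alpha> k * (u k ^ i * prod_list (map (\<lambda>j. u k ^ j) is)))"
    if "is \<in> tensor_indices n (m - 1)" for "is"
    using A that assms(2,3) unfolding tensor_indices_def by (cases m) auto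
  have "tensor_apply n m A x i = (\<Sum>is\<in>tensor_indices n (m - 1).
      \<Sum>k<r. \<alpha> k * u k ^ i * prod_list (map (\<lambda>j. u k ^ j * x j) is))"
    unfolding tensor_apply_def
    by (rule sum.cong[OF refl])
       (simp add: entry sum_distrib_left prod_list_map_mult ac_simps)
  also have "\<dots> = (\<Sum>k<r. \<alpha> k * u k ^ i *
      (\<Sum>is\<in>tensor_indices n (m - 1). prod_list (map (\<lambda>j. u k ^ j * x j) is)))"
    by (subst sum.swap) (simp add: sum_distrib_left)
  finally show ?thesis by (simp add: sum_tensor_indices_prod_list)
qed

lemma complete_hankel_tensor_apply:
  assumes "complete_hankel n m A" and "m \<ge> 1"
  obtains r :: nat and \<alpha> u :: "nat \<Rightarrow> real" where "\<And>k. k < r \<Longrightarrow> \<alpha> k > 0"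
    and "\<And>x i. i < n \<Longrightarrow>
      tensor_apply n m A x i = (\<Sum>k<r. \<alpha> k * u k ^ i * (\<Sum>j<n. u k ^ j * x j) ^ (m - 1))"
proof -
  from assms(1) obtain r :: nat and \<alpha> u :: "nat \<Rightarrow> real" where \<alpha>: "\<forall>k<r. \<alpha> k > 0"
    and A: "\<forall>is\<in>tensor_indices n m. A is = (\<Sum>k<r. \<alpha> k * prod_list (map (\<lambda>i. u k ^ i) is))"
    unfolding complete_hankel_def by blast
  show thesis
    using that \<alpha> tensor_apply_rank_one_sum[OF A assms(2)] by blast
qed

lemma weighted_even_moment_nonneg:
  fixes \<alpha> c u :: "nat \<Rightarrow> real"
  assumes "\<And>k. k < r \<Longrightarrow> \<alpha> k \<ge> 0" and "\<And>k. k < r \<Longrightarrow> c k \<ge> 0" and "even i"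
  shows "(\<Sum>k<r. \<alpha> k * u k ^ i * c k) \<ge> 0"
  using assms by (intro sum_nonneg) (simp add: zero_le_even_power)

lemma weighted_moments_vanish:
  fixes \<alpha> c u :: "nat \<Rightarrow> real"
  assumes "\<And>k. k < r \<Longrightarrow> \<alpha> k > 0" and "\<And>k. k < r \<Longrightarrow> c k \<ge> 0"
    and "(\<Sum>k<r. \<alpha> k * c k) = 0"
  shows "(\<Sum>k<r. \<alpha> k * u k ^ i * c k) = 0"
proof -
  have "\<alpha> k * c k = 0" if "k < r" for k
    using assms sum_nonneg_eq_0_iff[of "{..<r}" "\<lambda>k. \<alpha> k * c k"] that
    by (simp add: less_imp_le)
  then have "c k = 0" if "k < r" for k
    using assms(1) that by fastforce
  then show ?thesis by simp
qed

lemma complete_hankel_Z_eigenpair_sign: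
  assumes "odd m" and "n > 0" and "complete_hankel n m A" and "Z_eigenpair n m A lam x"
  shows "\<And>i. i < n \<Longrightarrow> even i \<Longrightarrow> lam * x i \<ge> 0"
    and "lam \<noteq> 0 \<Longrightarrow> lam * x 0 > 0"
proof -
  have "m \<ge> 1" using \<open>odd m\<close> by (cases m) auto
  obtain r :: nat and \<alpha> u :: "nat \<Rightarrow> real" where \<alpha>: "\<And>k. k < r \<Longrightarrow> \<alpha> k > 0"
    and apply_A: "\<And>y i. i < n \<Longrightarrow>
      tensor_apply n m A y i = (\<Sum>k<r. \<alpha> k * u k ^ i * (\<Sum>j<n. u k ^ j * y j) ^ (m - 1))"
    using complete_hankel_tensor_apply[OF assms(3) \<open>m \<ge> 1\<close>] by blast
  define c where "c k = (\<Sum>j<n. u k ^ j * x j) ^ (m - 1)" for k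
  have c: "c k \<ge> 0" for k
    unfolding c_def using \<open>odd m\<close> by (simp add: zero_le_even_power)
  have eig: "lam * x i = (\<Sum>k<r. \<alpha> k * u k ^ i * c k)" if "i < n" for i
    using assms(4) that apply_A[OF that, of x] unfolding Z_eigenpair_def c_def by simp
  show nonneg: "lam * x i \<ge> 0" if "i < n" "even i" for i
    unfolding eig[OF that(1)] using \<alpha> c that(2)
    by (intro weighted_even_moment_nonneg) (simp_all add: less_imp_le)
  show "lam * x 0 > 0" if "lam \<noteq> 0"
  proof -
    have "lam * x 0 \<noteq> 0"
    proof
      assume "lam * x 0 = 0"
      then have "(\<Sum>k<r. \<alpha> k * c k) = 0"
        using eig[OF \<open>n > 0\<close>] by simp
      then have "lam * x i = 0" if "i < n" for i
        using eig[OF that] weighted_moments_vanish[OF \<alpha> c] by simp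
      then have "(\<Sum>i<n. x i ^ 2) = 0"
        using \<open>lam \<noteq> 0\<close> by simp
      then show False
        using assms(4) unfolding Z_eigenpair_def by simp
    qed
    with nonneg[OF \<open>n > 0\<close> even_zero] show ?thesis by linarith
  qed
qed

theorem proposition5:
  fixes n m :: nat and A :: "nat list \<Rightarrow> real" and lam :: real and x :: "nat \<Rightarrow> real"
  assumes "n \<ge> 2" and "m \<ge> 3" and "odd m"
    and "complete_hankel n m A"
    and "Z_eigenpair n m A lam x"
  shows "(lam > 0 \<longrightarrow> (\<forall>i<n. even i \<longrightarrow> x i \<ge> 0) \<and> x 0 > 0) \<and>
         (lam < 0 \<longrightarrow> (\<forall>i<n. even i \<longrightarrow> x i \<le> 0) \<and> x 0 < 0)"
proof -
  have "n > 0" using \<open>n \<ge> 2\<close> by simp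
  note sign = complete_hankel_Z_eigenpair_sign[OF \<open>odd m\<close> this assms(4,5)]
  have "x i \<ge> 0" if "lam > 0" "i < n" "even i" for i
    using sign(1)[OF that(2,3)] that(1) by (simp add: zero_le_mult_iff)
  moreover have "x i \<le> 0" if "lam < 0" "i < n" "even i" for i
    using sign(1)[OF that(2,3)] that(1) by (simp add: zero_le_mult_iff)
  moreover have "x 0 > 0" if "lam > 0"
    using sign(2) that by (simp add: zero_less_mult_iff)
  moreover have "x 0 < 0" if "lam < 0"
    using sign(2) that by (simp add: zero_less_mult_iff)
  ultimately show ?thesis by blast
qed

end
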